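(* Let $p$ be a prime number and let $x,y,z\in\mathbb{N}$ with $x\le y\le z$ satisfy $\frac{4}{p}=\frac{1}{x}+\frac{1}{y}+\frac{1}{z}$. Suppose the solution is of Type I, i.e. $\gcd(x,p)=1$, $\gcd(y,p)=1$ and $\gcd(z,p)=p$. Then $$x=\left\lceil \frac{yp}{4y-p}\right\rceil.$$
   Context: $\mathbb{N}$ denotes the positive integers; $\lceil\cdot\rceil$ is the ceiling function. *)

theory Defs
  imports Complex_Main "HOL-Computational_Algebra.Primes"
begin

end

theory Submission
  imports Defs
begin

text \<open>Since \<open>4/p - 1/y = 1/x + 1/z\<close>, the quantity \<open>yp/(4y - p)\<close> equals
  \<open>1/(1/x + 1/z)\<close>, which lies in \<open>(x - 1, x]\<close> as soon as \<open>z > x(x - 1)\<close>.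
  For a solution of type I write \<open>z = pc\<close>; clearing denominators gives
  \<open>xy(4c - 1) = pc(x + y)\<close>, so \<open>p\<close> divides \<open>4c - 1 = pk\<close> and \<open>1/x + 1/y = k/c\<close>.
  Then \<open>kx \<le> 2c\<close>, and \<open>2kz = 2c(4c - 1) \<ge> kx(2kx - 1) > 2kx(x - 1)\<close>.\<close>

lemma ceiling_inverse_reciprocal_sum:
  fixes x z :: nat
  assumes "0 < x" and "x * (x - 1) < z"
  shows "\<lceil>1 / (1 / real x + 1 / real z)\<rceil> = int x"
proof (rule ceiling_unique)
  have "z > 0" using assms(2) by linarith
  then show "1 / (1 / real x + 1 / real z) \<le> real_of_int (int x)"
    using assms(1) by (simp add: field_simps)
  have "real (x * (x - 1)) < real z"
    using assms(2) by linarith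
  then have "real x * (real x - 1) < real z"
    using assms(1) by (simp add: of_nat_diff)
  then show "real_of_int (int x) - 1 < 1 / (1 / real x + 1 / real z)"
    using assms(1) \<open>z > 0\<close> by (simp add: field_simps)
qed

lemma mult_pred_less_of_reciprocal_sum:
  fixes k c x y p :: nat
  assumes sum: "k * x * y = c * (x + y)" and pk: "4 * c = p * k + 1"
    and "0 < x" and "x \<le> y"
  shows "x * (x - 1) < p * c"
proof -
  have "k > 0" using pk by (cases k) auto
  have kx: "k * x \<le> 2 * c"
  proof -
    have "k * x * y \<le> 2 * c * y" using sum \<open>x \<le> y\<close> by simp
    then show ?thesis using \<open>0 < x\<close> \<open>x \<le> y\<close> by simp
  qed
  have "2 * k * (x * (x - 1)) = k * x * (2 * x - 2)"
    by (simp add: algebra_simps)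
  also have "\<dots> < k * x * (2 * x - 1)"
    using \<open>0 < x\<close> \<open>k > 0\<close> by simp
  also have "\<dots> \<le> k * x * (2 * (k * x) - 1)"
    using \<open>k > 0\<close> by (intro mult_le_mono2 diff_le_mono) simp
  also have "\<dots> \<le> 2 * c * (2 * (2 * c) - 1)"
    using kx by (intro mult_le_mono[OF kx] diff_le_mono) simp
  also have "\<dots> = 2 * k * (p * c)"
    using pk by simp
  finally show ?thesis by simp
qed

lemma type_I_mult_pred_less_third:
  fixes p x y z :: nat
  assumes "prime p" and "p dvd z" and "coprime p x" and "coprime p y"
    and "0 < x" and "x \<le> y"
    and eq: "4 * x * y * z = p * (y * z + x * z + x * y)"
  shows "x * (x - 1) < z"
proof -
  obtain c where z: "z = p * c" using assms(2) by blast
  have "p > 0" using assms(1) prime_gt_0_nat by blast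
  have "p * (4 * x * y * c) = p * (p * c * (x + y) + x * y)"
    using eq unfolding z by (simp add: algebra_simps)
  then have c_eq: "4 * x * y * c = p * c * (x + y) + x * y"
    using \<open>p > 0\<close> by simp
  then have "c > 0" using \<open>0 < x\<close> \<open>x \<le> y\<close> by (cases c) auto
  have xy: "x * y * (4 * c - 1) = p * (c * (x + y))"
    using c_eq by (simp add: diff_mult_distrib2 algebra_simps)
  have "coprime p (x * y)" using assms(3,4) by simp
  then have "p dvd 4 * c - 1"
    using xy by (metis coprime_dvd_mult_right_iff dvd_triv_left)
  then obtain k where k: "4 * c - 1 = p * k" by blast
  have "p * (k * x * y) = p * (c * (x + y))"
    using xy unfolding k by (simp add: ac_simps)
  then have "k * x * y = c * (x + y)" using \<open>p > 0\<close> by simp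
  moreover have "4 * c = p * k + 1" using k \<open>c > 0\<close> by simp
  ultimately show ?thesis
    unfolding z using mult_pred_less_of_reciprocal_sum \<open>0 < x\<close> \<open>x \<le> y\<close> by blast
qed

theorem theorem2:
  fixes p x y z :: nat
  assumes "prime p"
    and "x > 0" and "y > 0" and "z > 0"
    and "x \<le> y" and "y \<le> z"
    and "4 / real p = 1 / real x + 1 / real y + 1 / real z"
    and "gcd x p = 1" and "gcd y p = 1" and "gcd z p = p"
  shows "int x = \<lceil>real y * real p / (4 * real y - real p)\<rceil>"
proof -
  have "p > 0" using assms(1) prime_gt_0_nat by blast
  have "real (4 * x * y * z) = real (p * (y * z + x * z + x * y))"
    using assms(7) assms(2-4) \<open>p > 0\<close> by (simp add: field_simps)
  then have eq: "4 * x * y * z = p * (y * z + x * z + x * y)"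
    by (simp only: of_nat_eq_iff)
  have "p dvd z" using assms(10) by (metis gcd_dvd1)
  moreover have "coprime p x" "coprime p y"
    using assms(8,9) by (simp_all add: coprime_iff_gcd_eq_1 gcd.commute)
  ultimately have z_large: "x * (x - 1) < z"
    using type_I_mult_pred_less_third assms(1,2,5) eq by blast
  have "1 / real x + 1 / real z = (4 * real y - real p) / (real y * real p)"
    using assms(7) assms(3) \<open>p > 0\<close> by (simp add: field_simps)
  then have "real y * real p / (4 * real y - real p) = 1 / (1 / real x + 1 / real z)"
    by simp
  then show ?thesis
    using ceiling_inverse_reciprocal_sum[OF assms(2) z_large] by simp
qed

end
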